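(* Fix $M,N\ge1$, $\kappa_{\mathrm{BS}},\kappa_{\mathrm{UE}}>0$, $\sigma^2>0$, and time fractions $0<\tau^{\mathrm{down}}_{\mathrm{data}}\le\tau$. For $p_{\mathrm{BS}}>0$ define the downlink capacity $$\mathrm{C}_{\mathrm{down}}(p_{\mathrm{BS}})=\frac{\tau^{\mathrm{down}}_{\mathrm{data}}}{\tau}\,\mathbb{E}\Big\{\max_{\theta_1,\dots,\theta_N\in[0,2\pi]}\log_2\Big(1+\frac{\widetilde{\mathbf{h}}^{\mathrm H}\widetilde{\mathbf{D}}^{-1}\widetilde{\mathbf{h}}}{1+\kappa_{\mathrm{UE}}\widetilde{\mathbf{h}}^{\mathrm H}\widetilde{\mathbf{D}}^{-1}\widetilde{\mathbf{h}}}\Big)\Big\},\qquad \widetilde{\mathbf{D}}=(1+\kappa_{\mathrm{UE}})\kappa_{\mathrm{BS}}\operatorname{diag}(\widetilde{\mathbf{h}}\widetilde{\mathbf{h}}^{\mathrm H})+\frac{\sigma^2}{p_{\mathrm{BS}}}\mathbf{I},$$ where the expectation is over the random channels and IRS phase noise. Then the limit $\mathrm{C}^{p_{\mathrm{BS}}}_{\mathrm{down}}(\infty)=\lim_{p_{\mathrm{BS}}\to\infty}\mathrm{C}_{\mathrm{down}}(p_{\mathrm{BS}})$ is finite and satisfies $$\frac{\tau^{\mathrm{down}}_{\mathrm{data}}}{\tau}\log_2\Big(1+\frac{1}{\kappa_{\mathrm{BS}}+\kappa_{\mathrm{UE}}(1+\kappa_{\mathrm{BS}})}\Big)\le \mathrm{C}^{p_{\mathrm{BS}}}_{\mathrm{down}}(\infty)\le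 \frac{\tau^{\mathrm{down}}_{\mathrm{data}}}{\tau}\log_2\Big(1+\frac{M}{\kappa_{\mathrm{BS}}+\kappa_{\mathrm{UE}}(M+\kappa_{\mathrm{BS}})}\Big).$$
   Context: IRS-assisted system: an $M$-antenna BS, a single-antenna user, and an IRS with $N$ reflecting elements. $\mathbf{h}_{\mathrm d}\sim\mathcal{CN}(\mathbf 0,\mathbf{C}_{\mathrm d})$ is the direct BS–user channel, $\mathbf{G}\in\mathbb{C}^{M\times N}$ the BS–IRS channel and $\mathbf{h}_{\mathrm r}\in\mathbb{C}^N$ the IRS–user channel, with cascaded channel $\mathbf{H}_{\mathrm{IRS}}=\mathbf{G}\operatorname{diag}(\mathbf{h}_{\mathrm r})\sim\mathcal{CN}(\mathbf 0,\mathbf{C}_{\mathrm{IRS}})$ (circularly symmetric complex Gaussian). The IRS matrix with phase noise is $\widetilde{\mathbf{\Phi}}=\operatorname{diag}(e^{j(\theta_1+\Delta\theta_1)},\dots,e^{j(\theta_N+\Delta\theta_N)})$, where the $\theta_i\in[0,2\pi]$ are the chosen phase shifts and the phase noises $\Delta\theta_i$ are random on $[-\pi,\pi)$ with circular mean direction zero and density symmetric about zero. The overall channel is $\widetilde{\mathbf{h}}=\mathbf{h}_{\mathrm d}+\mathbf{G}\widetilde{\mathbf{\Phi}}\mathbf{h}_{\mathrm r}$. $\kappa_{\mathrm{BS}},\kappa_{\mathrm{UE}}$ are the transceiver hardware-impairment levels at BS and user, $p_{\mathrm{BS}}$ the BS transmit power, $\sigma^2$ the receiver noise variance, $\tau$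 the coherence period and $\tau^{\mathrm{down}}_{\mathrm{data}}$ the downlink data phase length. $\operatorname{diag}(\mathbf{A})$ is the diagonal part of $\mathbf{A}$. *)

theory Defs
  imports "HOL-Probability.Probability"
begin

definition ctrans :: "complex^'n^'m \<Rightarrow> complex^'m^'n" where
  "ctrans A = (\<chi> i j. cnj (A $ j $ i))"

definition outer :: "complex^'m \<Rightarrow> complex^'m^'m" where
  "outer h = (\<chi> i j. h $ i * cnj (h $ j))"

definition diag_part :: "complex^'m^'m \<Rightarrow> complex^'m^'m" where
  "diag_part A = (\<chi> i j. if i = j then A $ i $ j else 0)"

definition diag_mat :: "complex^'n \<Rightarrow> complex^'n^'n" where
  "diag_mat v = (\<chi> i j. if i = j then v $ i else 0)"

definition herm_form :: "complex^'m \<Rightarrow> complex^'m^'m \<Rightarrow> complex^'m \<Rightarrow> complex" where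
  "herm_form x A y = (\<Sum>i\<in>UNIV. cnj (x $ i) * (A *v y) $ i)"

definition vec_mat :: "complex^'n^'m \<Rightarrow> complex^('m \<times> 'n)" where
  "vec_mat H = (\<chi> p. H $ fst p $ snd p)"

text \<open>A random vector z is CN(0,C) iff, almost surely, z = A w with C = A A^H, where
  the real and imaginary parts of the components of w are independent N(0,1/2) variables
  (i.e. w has i.i.d. standard circularly symmetric complex Gaussian entries).\<close>
definition complex_gaussian ::
  "'a measure \<Rightarrow> complex^'k^'k \<Rightarrow> ('a \<Rightarrow> complex^'k) \<Rightarrow> bool" where
  "complex_gaussian P C z \<longleftrightarrow>
     z \<in> borel_measurable P \<and>
     (\<exists>(A :: complex^'k^'k) (w :: 'a \<Rightarrow> complex^'k).
        C = A ** ctrans A \<and>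
        prob_space.indep_vars P (\<lambda>_. borel)
          (\<lambda>(i, b) \<omega>. if b then Re (w \<omega> $ i) else Im (w \<omega> $ i)) UNIV \<and>
        (\<forall>i. distributed P lborel (\<lambda>\<omega>. Re (w \<omega> $ i)) (\<lambda>x. ennreal (normal_density 0 (sqrt (1/2)) x))) \<and>
        (\<forall>i. distributed P lborel (\<lambda>\<omega>. Im (w \<omega> $ i)) (\<lambda>x. ennreal (normal_density 0 (sqrt (1/2)) x))) \<and>
        (AE \<omega> in P. z \<omega> = A *v w \<omega>))"

text \<open>A phase noise: random on [-pi,pi) with a density symmetric about zero and circular
  mean direction zero, i.e. E[e^{j X}] is a positive real number.\<close>
definition phase_noise :: "'a measure \<Rightarrow> ('a \<Rightarrow> real) \<Rightarrow> bool" where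
  "phase_noise P X \<longleftrightarrow>
     (\<exists>f. distributed P lborel X f \<and>
          (\<forall>x. x \<notin> {-pi..<pi} \<longrightarrow> f x = 0) \<and>
          (\<forall>x. f (-x) = f x)) \<and>
     (\<exists>\<rho>>0. integral\<^sup>L P (\<lambda>\<omega>. cis (X \<omega>)) = complex_of_real \<rho>)"

definition irs_matrix :: "real^'n \<Rightarrow> real^'n \<Rightarrow> complex^'n^'n" where
  "irs_matrix \<theta> d\<theta> = diag_mat (\<chi> i. cis (\<theta> $ i + d\<theta> $ i))"

definition overall_channel ::
  "complex^'m \<Rightarrow> complex^'n^'m \<Rightarrow> complex^'n \<Rightarrow> real^'n \<Rightarrow> real^'n \<Rightarrow> complex^'m" where
  "overall_channel h_d G hr \<theta> d\<theta> = h_d + G *v (irs_matrix \<theta> d\<theta> *v hr)"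

definition Dmat :: "real \<Rightarrow> real \<Rightarrow> real \<Rightarrow> real \<Rightarrow> complex^'m \<Rightarrow> complex^'m^'m" where
  "Dmat kBS kUE sigma2 p h =
     ((1 + kUE) * kBS) *\<^sub>R diag_part (outer h) + (sigma2 / p) *\<^sub>R mat 1"

definition quad :: "real \<Rightarrow> real \<Rightarrow> real \<Rightarrow> real \<Rightarrow> complex^'m \<Rightarrow> real" where
  "quad kBS kUE sigma2 p h = Re (herm_form h (matrix_inv (Dmat kBS kUE sigma2 p h)) h)"

definition phase_set :: "(real^'n) set" where
  "phase_set = {\<theta>. \<forall>i. \<theta> $ i \<in> {0..2*pi}}"

definition C_down ::
  "'a measure \<Rightarrow> ('a \<Rightarrow> complex^'m) \<Rightarrow> ('a \<Rightarrow> complex^'n^'m) \<Rightarrow> ('a \<Rightarrow> complex^'n)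
   \<Rightarrow> ('a \<Rightarrow> real^'n) \<Rightarrow> real \<Rightarrow> real \<Rightarrow> real \<Rightarrow> real \<Rightarrow> real \<Rightarrow> real \<Rightarrow> real" where
  "C_down P h_d G hr d\<theta> kBS kUE sigma2 tau_d tau p =
     tau_d / tau * integral\<^sup>L P (\<lambda>\<omega>.
        SUP \<theta>\<in>phase_set.
          (let q = quad kBS kUE sigma2 p (overall_channel (h_d \<omega>) (G \<omega>) (hr \<omega>) \<theta> (d\<theta> \<omega>))
           in log 2 (1 + q / (1 + kUE * q))))"

end

theory Submission
  imports Defs
begin

text \<open>Because \<open>D\<close> is diagonal, the SINR term equals
  \<open>\<Sum>i |h_i|\<^sup>2 / ((1 + \<kappa>_UE) \<kappa>_BS |h_i|\<^sup>2 + \<sigma>\<^sup>2/p)\<close>, which tends to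
  \<open>k / ((1 + \<kappa>_UE) \<kappa>_BS)\<close> as \<open>p \<rightarrow> \<infinity>\<close>, where \<open>k\<close> is the number of nonzero entries of the
  overall channel. Hence the optimised rate tends to the rate at the largest support size \<open>K\<close>
  attainable by the phases, and dominated convergence (all rates are bounded) carries this over to
  the expectation. The bounds come from \<open>1 \<le> K \<le> M\<close>: a nondegenerate complex Gaussian vector is
  almost surely nonzero, and if the direct or the cascaded channel is nonzero, some choice of
  phases makes the overall channel nonzero.\<close>

lemma emeasure_distributed_singleton:
  fixes X :: "'a \<Rightarrow> real"
  assumes "distributed M lborel X f"
  shows "emeasure M (X -` {x0} \<inter> space M) = 0"
proof -
  have "emeasure M (X -` {x0} \<inter> space M) = (\<integral>\<^sup>+x. f x * indicator {x0} x \<partial>lborel)"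
    by (rule distributed_emeasure[OF assms]) simp
  also have "\<dots> = (\<integral>\<^sup>+(x::real). 0 \<partial>lborel)"
    using AE_lborel_singleton[of x0] by (intro nn_integral_cong_AE) (auto elim!: eventually_mono)
  finally show ?thesis by simp
qed

lemma (in prob_space) AE_indep_add_nonzero:
  fixes Y Z :: "'a \<Rightarrow> real"
  assumes indep: "indep_var borel Y borel Z"
    and atomless: "\<And>y. emeasure M (Y -` {y} \<inter> space M) = 0"
  shows "AE \<omega> in M. Y \<omega> + Z \<omega> \<noteq> 0"
proof -
  have Y: "random_variable borel Y" and Z: "random_variable borel Z"
    using indep by (auto elim: indep_var_rv1 indep_var_rv2)
  interpret YZ: pair_prob_space "distr M borel Y" "distr M borel Z"
    unfolding pair_prob_space_def pair_sigma_finite_def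
    using prob_space_distr[OF Y] prob_space_distr[OF Z] by (auto intro: prob_space_imp_sigma_finite)
  define S where "S = {p \<in> space (borel \<Otimes>\<^sub>M borel). fst p + snd p = (0::real)}"
  have S: "S \<in> sets (borel \<Otimes>\<^sub>M borel)"
    unfolding S_def by measurable
  have "emeasure M {\<omega>\<in>space M. Y \<omega> + Z \<omega> = 0}
      = emeasure (distr M (borel \<Otimes>\<^sub>M borel) (\<lambda>\<omega>. (Y \<omega>, Z \<omega>))) S"
    using Y Z S by (subst emeasure_distr)
      (auto simp: S_def space_pair_measure intro!: arg_cong[where f="emeasure M"])
  also have "\<dots> = emeasure (distr M borel Y \<Otimes>\<^sub>M distr M borel Z) S"
    using indep indep_var_distribution_eq by metis
  also have "\<dots> = (\<integral>\<^sup>+z. emeasure (distr M borel Y) {- z} \<partial>distr M borel Z)"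
    using S by (subst YZ.emeasure_pair_measure_alt2)
      (auto simp: S_def space_pair_measure intro!: nn_integral_cong arg_cong[where f="emeasure _"])
  also have "\<dots> = 0"
    using Y atomless by (simp add: emeasure_distr)
  finally show ?thesis
    using Y Z by (subst AE_iff_measurable[OF _ refl]) auto
qed

lemma (in prob_space) AE_indep_sum_nonzero:
  fixes V :: "'t::finite \<Rightarrow> 'a \<Rightarrow> real" and a :: "'t \<Rightarrow> real"
  assumes indep: "indep_vars (\<lambda>_. borel) V UNIV"
    and a: "a t0 \<noteq> 0" and density: "distributed M lborel (V t0) f"
  shows "AE \<omega> in M. (\<Sum>t\<in>UNIV. a t * V t \<omega>) \<noteq> 0"
proof -
  have scaled: "indep_vars (\<lambda>_. borel) (\<lambda>t \<omega>. a t * V t \<omega>) (insert t0 (UNIV - {t0}))"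
    using indep_vars_compose2[OF indep, of "\<lambda>t x. a t * x"] by simp
  have "indep_var borel (\<lambda>\<omega>. a t0 * V t0 \<omega>) borel (\<lambda>\<omega>. \<Sum>t\<in>UNIV - {t0}. a t * V t \<omega>)"
    using indep_vars_sum[OF _ _ scaled] by simp
  moreover have "emeasure M ((\<lambda>\<omega>. a t0 * V t0 \<omega>) -` {y} \<inter> space M) = 0" for y
  proof -
    have "(\<lambda>\<omega>. a t0 * V t0 \<omega>) -` {y} = V t0 -` {y / a t0}"
      using a by (auto simp: field_simps)
    then show ?thesis
      using emeasure_distributed_singleton[OF density] by simp
  qed
  ultimately have "AE \<omega> in M. a t0 * V t0 \<omega> + (\<Sum>t\<in>UNIV - {t0}. a t * V t \<omega>) \<noteq> 0"
    by (rule AE_indep_add_nonzero)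
  then show ?thesis
    by (simp add: sum.remove)
qed

lemma (in prob_space) complex_gaussian_AE_nonzero:
  fixes z :: "'a \<Rightarrow> complex^'k::finite"
  assumes gauss: "complex_gaussian M C z" and C: "C \<noteq> 0"
  shows "AE \<omega> in M. z \<omega> \<noteq> 0"
proof -
  obtain A :: "complex^'k^'k" and w :: "'a \<Rightarrow> complex^'k" where
    CA: "C = A ** ctrans A" and
    indep: "indep_vars (\<lambda>_. borel) (\<lambda>(i, b) \<omega>. if b then Re (w \<omega> $ i) else Im (w \<omega> $ i)) UNIV" and
    Re_density: "\<And>i. distributed M lborel (\<lambda>\<omega>. Re (w \<omega> $ i)) (\<lambda>x. ennreal (normal_density 0 (sqrt (1/2)) x))" and
    Im_density: "\<And>i. distributed M lborel (\<lambda>\<omega>. Im (w \<omega> $ i)) (\<lambda>x. ennreal (normal_density 0 (sqrt (1/2)) x))" and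
    z: "AE \<omega> in M. z \<omega> = A *v w \<omega>"
    using gauss unfolding complex_gaussian_def by blast
  have "A \<noteq> 0" using C CA by auto
  then obtain i j where Aij: "A $ i $ j \<noteq> 0"
    by (metis vec_eq_iff zero_index)
  \<comment> \<open>\<open>Re (A w)\<^sub>i\<close> is a real linear combination of the independent Gaussian parts \<open>V\<close> of \<open>w\<close>
    whose coefficient at \<open>t0\<close> is nonzero.\<close>
  define V where "V = (\<lambda>(i, b) \<omega>. if b then Re (w \<omega> $ i) else Im (w \<omega> $ i))"
  define a where "a = (\<lambda>(j, b). if b then Re (A $ i $ j) else - Im (A $ i $ j))"
  define t0 where "t0 = (j, Re (A $ i $ j) \<noteq> 0)"
  have lincomb: "(\<Sum>t\<in>UNIV. a t * V t \<omega>) = Re ((A *v w \<omega>) $ i)" for \<omega>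
  proof -
    have "(\<Sum>t\<in>UNIV. a t * V t \<omega>) = (\<Sum>j\<in>UNIV. \<Sum>b\<in>UNIV. a (j, b) * V (j, b) \<omega>)"
      by (simp add: sum.cartesian_product UNIV_Times_UNIV[symmetric] del: UNIV_Times_UNIV)
    also have "\<dots> = Re ((A *v w \<omega>) $ i)"
      by (simp add: UNIV_bool a_def V_def matrix_vector_mult_def)
    finally show ?thesis .
  qed
  have "a t0 \<noteq> 0" using Aij by (auto simp: a_def t0_def complex_eq_iff)
  moreover have "distributed M lborel (V t0) (\<lambda>x. ennreal (normal_density 0 (sqrt (1/2)) x))"
    using Re_density Im_density by (cases "Re (A $ i $ j) = 0") (auto simp: V_def t0_def)
  ultimately have "AE \<omega> in M. Re ((A *v w \<omega>) $ i) \<noteq> 0"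
    using indep by (subst lincomb[symmetric], intro AE_indep_sum_nonzero) (auto simp: V_def)
  with z show ?thesis
    by eventually_elim auto
qed

lemma matrix_inv_diagonal:
  fixes d :: "'m::finite \<Rightarrow> 'a::field"
  assumes "\<And>i. d i \<noteq> 0"
  shows "matrix_inv (\<chi> i j. if i = j then d i else 0) = (\<chi> i j. if i = j then inverse (d i) else 0)"
proof -
  let ?D = "(\<chi> i j. if i = j then d i else 0) :: 'a^'m^'m"
  let ?E = "(\<chi> i j. if i = j then inverse (d i) else 0) :: 'a^'m^'m"
  have diag_mult: "(\<chi> i j. if i = j then a i else 0) ** (\<chi> i j. if i = j then b i else 0)
      = (\<chi> i j. if i = j then a i * b i else 0)" for a b :: "'m \<Rightarrow> 'a"
  proof -
    have "(if i = k then a i else 0) * (if k = j then b k else 0) = (if k = i then (if i = j then a i * b i else 0) else 0)"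
      for i j k by auto
    then show ?thesis by (simp add: vec_eq_iff matrix_matrix_mult_def)
  qed
  have DE: "?D ** ?E = mat 1" and ED: "?E ** ?D = mat 1"
    using assms by (simp_all add: diag_mult mat_def vec_eq_iff)
  have "?D ** matrix_inv ?D = mat 1 \<and> matrix_inv ?D ** ?D = mat 1"
    unfolding matrix_inv_def using DE ED by (rule someI[where x="?E", OF conjI])
  then have left_inv: "matrix_inv ?D ** ?D = mat 1" ..
  have "matrix_inv ?D = matrix_inv ?D ** (?D ** ?E)"
    by (simp add: DE)
  also have "\<dots> = ?E"
    by (simp add: matrix_mul_assoc left_inv)
  finally show ?thesis .
qed

lemma Dmat_eq_diagonal:
  "Dmat kBS kUE sigma2 p h =
     (\<chi> i j. if i = j then complex_of_real ((1 + kUE) * kBS * (cmod (h $ i))\<^sup>2 + sigma2 / p) else 0)"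
  unfolding Dmat_def diag_part_def outer_def mat_def
  by (simp add: vec_eq_iff) (simp add: complex_norm_square[symmetric] scaleR_conv_of_real)

definition sinr_sum :: "real \<Rightarrow> real \<Rightarrow> complex^'m::finite \<Rightarrow> real" where
  "sinr_sum c s h = (\<Sum>i\<in>UNIV. (cmod (h $ i))\<^sup>2 / (c * (cmod (h $ i))\<^sup>2 + s))"

lemma quad_eq_sinr_sum:
  assumes "kBS \<ge> 0" "kUE \<ge> 0" "sigma2 > 0" "p > 0"
  shows "quad kBS kUE sigma2 p h = sinr_sum ((1 + kUE) * kBS) (sigma2 / p) h"
proof -
  define d where "d i = (1 + kUE) * kBS * (cmod (h $ i))\<^sup>2 + sigma2 / p" for i
  have d_pos: "d i > 0" for i
    using assms unfolding d_def by (intro add_nonneg_pos) auto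
  have "matrix_inv (Dmat kBS kUE sigma2 p h) = (\<chi> i j. if i = j then inverse (complex_of_real (d i)) else 0)"
    unfolding Dmat_eq_diagonal d_def[symmetric] by (intro matrix_inv_diagonal) (metis d_pos of_real_eq_0_iff less_irrefl)
  then have "herm_form h (matrix_inv (Dmat kBS kUE sigma2 p h)) h
      = (\<Sum>i\<in>UNIV. cnj (h $ i) * h $ i / complex_of_real (d i))"
    unfolding herm_form_def
    by (simp add: matrix_vector_mult_def if_distrib if_distribR divide_inverse ac_simps cong: if_cong)
  also have "\<dots> = (\<Sum>i\<in>UNIV. complex_of_real ((cmod (h $ i))\<^sup>2 / d i))"
    by (simp add: complex_norm_square[symmetric] mult.commute)
  finally show ?thesis
    unfolding quad_def sinr_sum_def d_def by simp
qed

definition support_card :: "complex^'m::finite \<Rightarrow> nat" where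
  "support_card h = card {i. h $ i \<noteq> 0}"

definition rate :: "real \<Rightarrow> real \<Rightarrow> real" where
  "rate k q = log 2 (1 + q / (1 + k * q))"

lemma support_card_le_CARD: "support_card (h::complex^'m::finite) \<le> CARD('m)"
  unfolding support_card_def by (rule card_mono) auto

lemma sum_support_const: "(\<Sum>i\<in>UNIV. if h $ i \<noteq> 0 then x else 0) = real (support_card h) * x"
  by (simp add: sum.If_cases Int_def support_card_def)

lemma sinr_sum_nonneg: "c \<ge> 0 \<Longrightarrow> s > 0 \<Longrightarrow> 0 \<le> sinr_sum c s h"
  unfolding sinr_sum_def by (intro sum_nonneg divide_nonneg_pos) (auto intro: add_nonneg_pos)

lemma sinr_sum_le_support_card:
  assumes "c > 0" "s > 0"
  shows "sinr_sum c s h \<le> real (support_card h) / c"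
proof -
  have "(cmod (h $ i))\<^sup>2 / (c * (cmod (h $ i))\<^sup>2 + s) \<le> (if h $ i \<noteq> 0 then 1 / c else 0)" for i
  proof (cases "h $ i = 0")
    case False
    have "c * (cmod (h $ i))\<^sup>2 + s > 0" using assms by (intro add_nonneg_pos) auto
    then show ?thesis using False assms by (simp add: divide_le_eq field_simps)
  qed simp
  then have "sinr_sum c s h \<le> (\<Sum>i\<in>UNIV. if h $ i \<noteq> 0 then 1 / c else 0)"
    unfolding sinr_sum_def by (intro sum_mono)
  then show ?thesis
    by (simp add: sum_support_const)
qed

lemma sinr_sum_tendsto_support_card:
  assumes "c > 0" "sigma2 > 0"
  shows "((\<lambda>p. sinr_sum c (sigma2 / p) h) \<longlongrightarrow> real (support_card h) / c) at_top"
proof -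
  have noise: "((\<lambda>p::real. sigma2 / p) \<longlongrightarrow> 0) at_top"
    by (intro tendsto_divide_0[OF tendsto_const] filterlim_at_top_imp_at_infinity filterlim_ident)
  have "((\<lambda>p. (cmod (h $ i))\<^sup>2 / (c * (cmod (h $ i))\<^sup>2 + sigma2 / p)) \<longlongrightarrow> (if h $ i \<noteq> 0 then 1 / c else 0)) at_top" for i
  proof (cases "h $ i = 0")
    case False
    then have "((\<lambda>p. (cmod (h $ i))\<^sup>2 / (c * (cmod (h $ i))\<^sup>2 + sigma2 / p)) \<longlongrightarrow> (cmod (h $ i))\<^sup>2 / (c * (cmod (h $ i))\<^sup>2 + 0)) at_top"
      using assms by (intro tendsto_intros noise) auto
    with False show ?thesis by simp
  qed simp
  then have "((\<lambda>p. sinr_sum c (sigma2 / p) h) \<longlongrightarrow> (\<Sum>i\<in>UNIV. if h $ i \<noteq> 0 then 1 / c else 0)) at_top"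
    unfolding sinr_sum_def by (rule tendsto_sum)
  then show ?thesis
    by (simp add: sum_support_const)
qed

lemma rate_mono: assumes "k > 0" "0 \<le> q" "q \<le> q'" shows "rate k q \<le> rate k q'"
proof -
  have "q / (1 + k * q) \<le> q' / (1 + k * q')"
    using assms by (simp add: field_simps add_pos_nonneg)
  moreover have "0 \<le> q / (1 + k * q)" using assms by simp
  ultimately show ?thesis unfolding rate_def by (intro log_mono) auto
qed

lemma rate_nonneg: "k > 0 \<Longrightarrow> 0 \<le> q \<Longrightarrow> 0 \<le> rate k q"
  using rate_mono[of k 0 q] by (simp add: rate_def)

lemma rate_div_eq:
  assumes "c > 0" "k > 0" "m \<ge> 0"
  shows "rate k (m / c) = log 2 (1 + m / (c + k * m))"
proof -
  have "c + k * m > 0" using assms by (intro add_pos_nonneg) auto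
  then have "(m / c) / (1 + k * (m / c)) = m / (c + k * m)"
    using assms by (simp add: field_simps)
  then show ?thesis by (simp only: rate_def)
qed

lemma tendsto_rate:
  assumes "k > 0" "0 \<le> q" "(f \<longlongrightarrow> q) F"
  shows "((\<lambda>x. rate k (f x)) \<longlongrightarrow> rate k q) F"
proof -
  have "1 + k * q > 0" using assms by (intro add_pos_nonneg) auto
  moreover from this have "1 + q / (1 + k * q) > 0"
    using assms by (simp add: add_pos_nonneg)
  ultimately show ?thesis
    unfolding rate_def using assms by (intro tendsto_intros) auto
qed

lemma continuous_on_rate_sinr_sum:
  assumes "c \<ge> 0" "s > 0" "k > 0"
  shows "continuous_on UNIV (\<lambda>h::complex^'m::finite. rate k (sinr_sum c s h))"
proof -
  have "c * (cmod (h $ i))\<^sup>2 + s \<noteq> 0" for h :: "complex^'m" and i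
    using assms by (metis add_nonneg_pos less_irrefl mult_nonneg_nonneg zero_le_power2)
  then have sinr_cont: "continuous_on UNIV (\<lambda>h::complex^'m. sinr_sum c s h)"
    unfolding sinr_sum_def by (intro continuous_intros) auto
  have denom: "1 + k * sinr_sum c s h > 0" for h :: "complex^'m"
    using sinr_sum_nonneg[OF assms(1,2), of h] assms by (intro add_pos_nonneg) auto
  have arg: "1 + sinr_sum c s h / (1 + k * sinr_sum c s h) > 0" for h :: "complex^'m"
    using sinr_sum_nonneg[OF assms(1,2), of h] assms by (intro add_pos_nonneg divide_nonneg_pos) auto
  show ?thesis
    unfolding rate_def using denom arg
    by (intro continuous_intros sinr_cont) (auto simp: less_imp_neq[symmetric])
qed

lemma overall_channel_nth:
  "overall_channel h_d G hr \<theta> d\<theta> $ m = h_d $ m + (\<Sum>n\<in>UNIV. G $ m $ n * (cis (\<theta> $ n + d\<theta> $ n) * hr $ n))"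
proof -
  have "(irs_matrix \<theta> d\<theta> *v hr) $ n = cis (\<theta> $ n + d\<theta> $ n) * hr $ n" for n
    unfolding irs_matrix_def diag_mat_def matrix_vector_mult_def
    by (simp add: if_distrib if_distribR cong: if_cong)
  then show ?thesis
    unfolding overall_channel_def by (simp add: matrix_vector_mult_def)
qed

lemma continuous_on_overall_channel:
  fixes \<theta> :: "real^'n::finite"
  shows "continuous_on UNIV (\<lambda>x :: (complex^'m::finite) \<times> (complex^'n^'m) \<times> (complex^'n) \<times> (real^'n).
      overall_channel (fst x) (fst (snd x)) (fst (snd (snd x))) \<theta> (snd (snd (snd x))))"
proof -
  have "overall_channel h_d G hr \<theta> d\<theta> =
      (\<chi> m. h_d $ m + (\<Sum>n\<in>UNIV. G $ m $ n * (cis (\<theta> $ n + d\<theta> $ n) * hr $ n)))"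
    for h_d :: "complex^'m" and G :: "complex^'n^'m" and hr d\<theta>
    by (simp add: vec_eq_iff overall_channel_nth)
  then show ?thesis
    by (simp only:) (intro continuous_intros)
qed

lemma zero_in_phase_set: "0 \<in> phase_set"
  by (simp add: phase_set_def)

text \<open>Flipping the phase of a single element by \<open>\<pi>\<close> isolates its cascaded path.\<close>
lemma ex_phase_overall_channel_nonzero:
  fixes h_d :: "complex^'m::finite" and G :: "complex^'n::finite^'m"
  assumes "h_d \<noteq> 0 \<or> G ** diag_mat hr \<noteq> 0"
  shows "\<exists>\<theta>\<in>phase_set. overall_channel h_d G hr \<theta> d\<theta> \<noteq> 0"
proof (rule ccontr)
  assume "\<not> ?thesis"
  then have vanish: "\<And>\<theta>. \<theta> \<in> phase_set \<Longrightarrow> overall_channel h_d G hr \<theta> d\<theta> $ m = 0" for m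
    by auto
  have cascaded: "G $ m $ n * hr $ n = 0" for m n
  proof -
    define \<theta> :: "real^'n" where "\<theta> = (\<chi> i. if i = n then pi else 0)"
    have "\<theta> \<in> phase_set" by (simp add: phase_set_def \<theta>_def)
    have "cis (pi + d\<theta> $ n) = - cis (d\<theta> $ n)" by (simp add: cis_mult[symmetric])
    then have "(G $ m $ i * (cis (\<theta> $ i + d\<theta> $ i) * hr $ i) - G $ m $ i * (cis (0 $ i + d\<theta> $ i) * hr $ i)) =
        (if i = n then - 2 * cis (d\<theta> $ n) * (G $ m $ n * hr $ n) else 0)" for i
      by (auto simp: \<theta>_def algebra_simps)
    then have "overall_channel h_d G hr \<theta> d\<theta> $ m - overall_channel h_d G hr 0 d\<theta> $ m =
        - 2 * cis (d\<theta> $ n) * (G $ m $ n * hr $ n)"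
      by (simp add: overall_channel_nth sum_subtractf[symmetric])
    then have "- 2 * cis (d\<theta> $ n) * (G $ m $ n * hr $ n) = 0"
      using vanish[OF \<open>\<theta> \<in> phase_set\<close>] vanish[OF zero_in_phase_set] by simp
    then show ?thesis by simp
  qed
  then have "G ** diag_mat hr = 0"
    by (simp add: vec_eq_iff matrix_matrix_mult_def diag_mat_def if_distrib if_distribR cong: if_cong)
  moreover have "h_d = 0"
    using vanish[OF zero_in_phase_set] cascaded
    by (simp add: vec_eq_iff overall_channel_nth mult.left_commute[of _ "cis _"])
  ultimately show False using assms by simp
qed

definition max_support_card :: "('t \<Rightarrow> complex^'m::finite) \<Rightarrow> 't set \<Rightarrow> nat" where
  "max_support_card H \<Theta> = Max ((\<lambda>\<theta>. support_card (H \<theta>)) ` \<Theta>)"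

lemma finite_support_card_image: "finite ((\<lambda>\<theta>. support_card (H \<theta> :: complex^'m::finite)) ` \<Theta>)"
  by (rule finite_subset[of _ "{..CARD('m)}"]) (auto simp: support_card_le_CARD)

lemma support_card_le_max_support_card:
  "\<theta> \<in> \<Theta> \<Longrightarrow> support_card (H \<theta>) \<le> max_support_card H \<Theta>"
  unfolding max_support_card_def by (intro Max_ge finite_support_card_image) auto

lemma max_support_card_attained:
  assumes "\<Theta> \<noteq> {}"
  shows "\<exists>\<theta>\<in>\<Theta>. support_card (H \<theta>) = max_support_card H \<Theta>"
proof -
  have "max_support_card H \<Theta> \<in> (\<lambda>\<theta>. support_card (H \<theta>)) ` \<Theta>"
    unfolding max_support_card_def using assms by (intro Max_in finite_support_card_image) auto
  then show ?thesis by (metis imageE)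
qed

lemma max_support_card_le_CARD:
  assumes "\<Theta> \<noteq> {}"
  shows "max_support_card (H :: 't \<Rightarrow> complex^'m::finite) \<Theta> \<le> CARD('m)"
proof -
  obtain \<theta> where "support_card (H \<theta>) = max_support_card H \<Theta>"
    using max_support_card_attained[OF assms] by blast
  then show ?thesis using support_card_le_CARD[of "H \<theta>"] by simp
qed

lemma max_support_card_pos:
  assumes "\<theta> \<in> \<Theta>" "H \<theta> \<noteq> 0"
  shows "1 \<le> max_support_card H \<Theta>"
proof -
  obtain i where "H \<theta> $ i \<noteq> 0" using assms(2) by (metis vec_eq_iff zero_index)
  then have "1 \<le> support_card (H \<theta>)"
    unfolding support_card_def by (auto simp: Suc_le_eq card_gt_0_iff)
  also have "\<dots> \<le> max_support_card H \<Theta>"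
    using assms(1) by (rule support_card_le_max_support_card)
  finally show ?thesis .
qed

lemma rate_sinr_sum_le_max_support_card:
  assumes "c > 0" "k > 0" "s > 0" "\<theta> \<in> \<Theta>"
  shows "rate k (sinr_sum c s (H \<theta>)) \<le> rate k (max_support_card H \<Theta> / c)"
proof -
  have "sinr_sum c s (H \<theta>) \<le> support_card (H \<theta>) / c"
    using assms by (intro sinr_sum_le_support_card)
  also have "\<dots> \<le> max_support_card H \<Theta> / c"
    using assms support_card_le_max_support_card[OF assms(4)] by (intro divide_right_mono) auto
  finally show ?thesis
    using assms by (intro rate_mono sinr_sum_nonneg) auto
qed

lemma
  fixes H :: "'t \<Rightarrow> complex^'m::finite"
  assumes "c > 0" "k > 0" "s > 0"
  shows bdd_above_rate_sinr_sum: "bdd_above ((\<lambda>\<theta>. rate k (sinr_sum c s (H \<theta>))) ` \<Theta>)"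
    and SUP_rate_sinr_sum_le: "\<Theta> \<noteq> {} \<Longrightarrow>
      (SUP \<theta>\<in>\<Theta>. rate k (sinr_sum c s (H \<theta>))) \<le> rate k (max_support_card H \<Theta> / c)"
    and SUP_rate_sinr_sum_nonneg: "\<Theta> \<noteq> {} \<Longrightarrow> 0 \<le> (SUP \<theta>\<in>\<Theta>. rate k (sinr_sum c s (H \<theta>)))"
proof -
  show bdd: "bdd_above ((\<lambda>\<theta>. rate k (sinr_sum c s (H \<theta>))) ` \<Theta>)"
    using rate_sinr_sum_le_max_support_card[OF assms] by (rule bdd_aboveI2)
  assume "\<Theta> \<noteq> {}"
  then show "(SUP \<theta>\<in>\<Theta>. rate k (sinr_sum c s (H \<theta>))) \<le> rate k (max_support_card H \<Theta> / c)"
    using rate_sinr_sum_le_max_support_card[OF assms] by (intro cSUP_least)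
  from \<open>\<Theta> \<noteq> {}\<close> obtain \<theta> where "\<theta> \<in> \<Theta>" by auto
  have "0 \<le> rate k (sinr_sum c s (H \<theta>))"
    using assms by (intro rate_nonneg sinr_sum_nonneg) auto
  also have "\<dots> \<le> (SUP \<theta>\<in>\<Theta>. rate k (sinr_sum c s (H \<theta>)))"
    using bdd \<open>\<theta> \<in> \<Theta>\<close> by (rule cSUP_upper2) simp
  finally show "0 \<le> (SUP \<theta>\<in>\<Theta>. rate k (sinr_sum c s (H \<theta>)))" .
qed

text \<open>The supremum is squeezed between the rate of a phase attaining the maximal support, which
  converges, and the limit itself.\<close>
lemma tendsto_SUP_rate_sinr_sum:
  fixes H :: "'t \<Rightarrow> complex^'m::finite"
  assumes c: "c > 0" and k: "k > 0" and sigma2: "sigma2 > 0" and "\<Theta> \<noteq> {}"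
  shows "((\<lambda>p. SUP \<theta>\<in>\<Theta>. rate k (sinr_sum c (sigma2 / p) (H \<theta>)))
           \<longlongrightarrow> rate k (max_support_card H \<Theta> / c)) at_top"
proof -
  obtain \<theta>0 where \<theta>0: "\<theta>0 \<in> \<Theta>" "support_card (H \<theta>0) = max_support_card H \<Theta>"
    using max_support_card_attained[OF \<open>\<Theta> \<noteq> {}\<close>] by blast
  have attained: "((\<lambda>p. rate k (sinr_sum c (sigma2 / p) (H \<theta>0))) \<longlongrightarrow> rate k (max_support_card H \<Theta> / c)) at_top"
    using tendsto_rate[OF k _ sinr_sum_tendsto_support_card[OF c sigma2, of "H \<theta>0"]] c \<theta>0(2) by simp
  have noise: "\<forall>\<^sub>F p in at_top. sigma2 / p > 0"
    using eventually_gt_at_top[of 0] by eventually_elim (use sigma2 in simp)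
  then have "\<forall>\<^sub>F p in at_top.
      rate k (sinr_sum c (sigma2 / p) (H \<theta>0)) \<le> (SUP \<theta>\<in>\<Theta>. rate k (sinr_sum c (sigma2 / p) (H \<theta>)))"
    by eventually_elim (rule cSUP_upper[OF \<theta>0(1) bdd_above_rate_sinr_sum[OF c k]])
  moreover from noise have "\<forall>\<^sub>F p in at_top.
      (SUP \<theta>\<in>\<Theta>. rate k (sinr_sum c (sigma2 / p) (H \<theta>))) \<le> rate k (max_support_card H \<Theta> / c)"
    by eventually_elim (rule SUP_rate_sinr_sum_le[OF c k _ \<open>\<Theta> \<noteq> {}\<close>])
  ultimately show ?thesis
    using attained by (rule tendsto_sandwich[OF _ _ _ tendsto_const])
qed

text \<open>A supremum of continuous functions is lower semicontinuous.\<close>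
lemma borel_measurable_SUP_continuous:
  fixes g :: "'t \<Rightarrow> 'b::topological_space \<Rightarrow> real"
  assumes cont: "\<And>\<theta>. \<theta> \<in> \<Theta> \<Longrightarrow> continuous_on UNIV (g \<theta>)"
    and bdd: "\<And>x. bdd_above ((\<lambda>\<theta>. g \<theta> x) ` \<Theta>)" and "\<Theta> \<noteq> {}"
  shows "(\<lambda>x. SUP \<theta>\<in>\<Theta>. g \<theta> x) \<in> borel_measurable borel"
  unfolding borel_measurable_iff_greater
proof
  fix a
  have "{x \<in> space borel. a < (SUP \<theta>\<in>\<Theta>. g \<theta> x)} = (\<Union>\<theta>\<in>\<Theta>. {x. a < g \<theta> x})"
    using less_cSUP_iff[OF \<open>\<Theta> \<noteq> {}\<close> bdd] by auto
  moreover have "open (\<Union>\<theta>\<in>\<Theta>. {x. a < g \<theta> x})"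
    using cont by (intro open_UN ballI open_Collect_less continuous_on_const) auto
  ultimately show "{x \<in> space borel. a < (SUP \<theta>\<in>\<Theta>. g \<theta> x)} \<in> sets borel"
    by simp
qed

lemma borel_measurable_SUP_rate_sinr_sum_overall_channel:
  assumes "h_d \<in> borel_measurable M" "G \<in> borel_measurable M" "hr \<in> borel_measurable M"
    and "d\<theta> \<in> borel_measurable M" and "c > 0" "k > 0" "s > 0"
  shows "(\<lambda>\<omega>. SUP \<theta>\<in>phase_set. rate k (sinr_sum c s (overall_channel (h_d \<omega>) (G \<omega>) (hr \<omega>) \<theta> (d\<theta> \<omega>))))
           \<in> borel_measurable M"
proof -
  have channels: "(\<lambda>\<omega>. (h_d \<omega>, G \<omega>, hr \<omega>, d\<theta> \<omega>)) \<in> borel_measurable M"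
    using assms by (intro borel_measurable_Pair)
  have "(\<lambda>x. SUP \<theta>\<in>phase_set. rate k (sinr_sum c s
        (overall_channel (fst x) (fst (snd x)) (fst (snd (snd x))) \<theta> (snd (snd (snd x))))))
      \<in> borel_measurable borel"
    using assms zero_in_phase_set
    by (intro borel_measurable_SUP_continuous bdd_above_rate_sinr_sum
          continuous_on_compose2[OF continuous_on_rate_sinr_sum continuous_on_overall_channel]) auto
  from measurable_compose[OF channels this] show ?thesis
    by simp
qed

lemma (in prob_space)
  fixes H :: "'a \<Rightarrow> 't \<Rightarrow> complex^'m::finite"
  assumes c: "c > 0" and k: "k > 0" and sigma2: "sigma2 > 0" and "\<Theta> \<noteq> {}"
    and meas: "\<And>s. s > 0 \<Longrightarrow> (\<lambda>\<omega>. SUP \<theta>\<in>\<Theta>. rate k (sinr_sum c s (H \<omega> \<theta>))) \<in> borel_measurable M"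
  shows tendsto_expectation_SUP_rate_sinr_sum:
      "((\<lambda>p. expectation (\<lambda>\<omega>. SUP \<theta>\<in>\<Theta>. rate k (sinr_sum c (sigma2 / p) (H \<omega> \<theta>))))
         \<longlongrightarrow> expectation (\<lambda>\<omega>. rate k (max_support_card (H \<omega>) \<Theta> / c))) at_top"
    and integrable_rate_max_support_card:
      "integrable M (\<lambda>\<omega>. rate k (max_support_card (H \<omega>) \<Theta> / c))"
proof -
  \<comment> \<open>\<open>max t 1\<close> keeps the noise term positive, so that every \<open>S t\<close> is measurable as dominated
    convergence requires; it does not change the limit.\<close>
  define S where "S t \<omega> = (SUP \<theta>\<in>\<Theta>. rate k (sinr_sum c (sigma2 / max t 1) (H \<omega> \<theta>)))" for t \<omega>
  define T where "T \<omega> = rate k (max_support_card (H \<omega>) \<Theta> / c)" for \<omega>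
  define B where "B = rate k (CARD('m) / c)"
  have noise: "sigma2 / max t 1 > 0" for t
    using sigma2 by simp
  have S_meas: "S t \<in> borel_measurable M" for t
    unfolding S_def using noise by (rule meas)
  have S_eq: "\<forall>\<^sub>F t in at_top. (SUP \<theta>\<in>\<Theta>. rate k (sinr_sum c (sigma2 / t) (H \<omega> \<theta>))) = S t \<omega>" for \<omega>
    using eventually_ge_at_top[of 1] by eventually_elim (simp add: S_def)
  have S_lim: "((\<lambda>t. S t \<omega>) \<longlongrightarrow> T \<omega>) at_top" for \<omega>
    using tendsto_SUP_rate_sinr_sum[OF c k sigma2 \<open>\<Theta> \<noteq> {}\<close>, of "H \<omega>"] tendsto_cong[OF S_eq[of \<omega>]]
    by (simp add: T_def)
  have T_le: "T \<omega> \<le> B" for \<omega>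
    unfolding T_def B_def using max_support_card_le_CARD[OF \<open>\<Theta> \<noteq> {}\<close>] c k
    by (intro rate_mono divide_right_mono) auto
  have T_nonneg: "0 \<le> T \<omega>" for \<omega>
    unfolding T_def using c k by (intro rate_nonneg) auto
  have S_bound: "norm (S t \<omega>) \<le> B" for t \<omega>
    using SUP_rate_sinr_sum_nonneg[OF c k noise \<open>\<Theta> \<noteq> {}\<close>, of t "H \<omega>"]
      SUP_rate_sinr_sum_le[OF c k noise \<open>\<Theta> \<noteq> {}\<close>, of t "H \<omega>"] T_le[of \<omega>]
    by (simp add: S_def T_def)
  have T_meas: "T \<in> borel_measurable M"
  proof (rule borel_measurable_LIMSEQ_real)
    show "(\<lambda>n. S (real n) \<omega>) \<longlonglongrightarrow> T \<omega>" for \<omega>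
      by (rule filterlim_compose[OF S_lim filterlim_real_sequentially])
  qed (rule S_meas)
  have "AE \<omega> in M. norm (T \<omega>) \<le> B"
    using T_le T_nonneg by (intro AE_I2) simp
  from this T_meas show "integrable M (\<lambda>\<omega>. rate k (max_support_card (H \<omega>) \<Theta> / c))"
    unfolding T_def by (rule integrable_const_bound)
  have "((\<lambda>t. expectation (S t)) \<longlongrightarrow> expectation T) at_top"
    by (rule integral_dominated_convergence_at_top[where w="\<lambda>_. B"])
       (use T_meas S_meas S_lim S_bound in \<open>auto intro!: always_eventually\<close>)
  moreover have "\<forall>\<^sub>F t in at_top. expectation (S t) =
      expectation (\<lambda>\<omega>. SUP \<theta>\<in>\<Theta>. rate k (sinr_sum c (sigma2 / t) (H \<omega> \<theta>)))"
    using eventually_ge_at_top[of 1] by eventually_elim (simp add: S_def[abs_def])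
  ultimately show "((\<lambda>p. expectation (\<lambda>\<omega>. SUP \<theta>\<in>\<Theta>. rate k (sinr_sum c (sigma2 / p) (H \<omega> \<theta>))))
      \<longlongrightarrow> expectation (\<lambda>\<omega>. rate k (max_support_card (H \<omega>) \<Theta> / c))) at_top"
    unfolding T_def by (rule tendsto_cong[THEN iffD1, rotated])
qed

lemma C_down_eq_rate_sinr_sum:
  assumes "kBS \<ge> 0" "kUE \<ge> 0" "sigma2 > 0" "p > 0"
  shows "C_down P h_d G hr d\<theta> kBS kUE sigma2 tau_d tau p = tau_d / tau * integral\<^sup>L P (\<lambda>\<omega>.
      SUP \<theta>\<in>phase_set. rate kUE (sinr_sum ((1 + kUE) * kBS) (sigma2 / p)
        (overall_channel (h_d \<omega>) (G \<omega>) (hr \<omega>) \<theta> (d\<theta> \<omega>))))"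
  unfolding C_down_def rate_def quad_eq_sinr_sum[OF assms] Let_def ..

lemma (in prob_space) AE_one_le_max_support_card:
  assumes "complex_gaussian M Cd h_d"
    and "complex_gaussian M Cirs (\<lambda>\<omega>. vec_mat (G \<omega> ** diag_mat (hr \<omega>)))"
    and "Cd \<noteq> 0 \<or> Cirs \<noteq> 0"
  shows "AE \<omega> in M. 1 \<le> max_support_card (\<lambda>\<theta>. overall_channel (h_d \<omega>) (G \<omega>) (hr \<omega>) \<theta> (d\<theta> \<omega>)) phase_set"
proof -
  have "vec_mat (0 :: complex^'n::finite^'m::finite) = 0"
    by (simp add: vec_mat_def vec_eq_iff)
  then have "AE \<omega> in M. h_d \<omega> \<noteq> 0 \<or> G \<omega> ** diag_mat (hr \<omega>) \<noteq> 0"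
    using assms(3) complex_gaussian_AE_nonzero[OF assms(1)] complex_gaussian_AE_nonzero[OF assms(2)]
    by (auto elim!: eventually_mono)
  then show ?thesis
    by eventually_elim (metis ex_phase_overall_channel_nonzero max_support_card_pos)
qed

theorem theorem2:
  fixes P :: "'a measure"
    and h_d :: "'a \<Rightarrow> complex^'m::finite"
    and G :: "'a \<Rightarrow> complex^'n::finite^'m"
    and hr :: "'a \<Rightarrow> complex^'n"
    and d\<theta> :: "'a \<Rightarrow> real^'n"
    and Cd :: "complex^'m^'m"
    and Cirs :: "complex^('m \<times> 'n)^('m \<times> 'n)"
    and kBS kUE sigma2 tau_d tau :: real
  assumes "prob_space P"
    and "G \<in> borel_measurable P" and "hr \<in> borel_measurable P"
    and "d\<theta> \<in> borel_measurable P"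
    and "complex_gaussian P Cd h_d"
    and "complex_gaussian P Cirs (\<lambda>\<omega>. vec_mat (G \<omega> ** diag_mat (hr \<omega>)))"
    and "\<And>i. phase_noise P (\<lambda>\<omega>. d\<theta> \<omega> $ i)"
    and "Cd \<noteq> 0 \<or> Cirs \<noteq> 0"
    and "kBS > 0" and "kUE > 0" and "sigma2 > 0"
    and "0 < tau_d" and "tau_d \<le> tau"
  shows "\<exists>L. ((\<lambda>p. C_down P h_d G hr d\<theta> kBS kUE sigma2 tau_d tau p) \<longlongrightarrow> L) at_top \<and>
             tau_d / tau * log 2 (1 + 1 / (kBS + kUE * (1 + kBS))) \<le> L \<and>
             L \<le> tau_d / tau * log 2 (1 + real CARD('m) / (kBS + kUE * (real CARD('m) + kBS)))"
proof -
  interpret prob_space P by fact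
  define c where "c = (1 + kUE) * kBS"
  define H where "H = (\<lambda>\<omega> \<theta>. overall_channel (h_d \<omega>) (G \<omega>) (hr \<omega>) \<theta> (d\<theta> \<omega>))"
  define T where "T \<omega> = rate kUE (max_support_card (H \<omega>) phase_set / c)" for \<omega>
  have c: "c > 0" and kUE: "kUE > 0" and sigma2: "sigma2 > 0" and ratio: "tau_d / tau \<ge> 0"
    using assms by (auto simp: c_def)
  have phases: "phase_set \<noteq> {}"
    using zero_in_phase_set by blast
  have "h_d \<in> borel_measurable P"
    using assms(5) unfolding complex_gaussian_def by blast
  then have meas: "(\<lambda>\<omega>. SUP \<theta>\<in>phase_set. rate kUE (sinr_sum c s (H \<omega> \<theta>))) \<in> borel_measurable P" if "s > 0" for s
    unfolding H_def using assms(2-4) c kUE that by (intro borel_measurable_SUP_rate_sinr_sum_overall_channel)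
  have integrable: "integrable P T"
    unfolding T_def using c kUE sigma2 phases meas by (rule integrable_rate_max_support_card)
  have "\<forall>\<^sub>F p in at_top. tau_d / tau * expectation (\<lambda>\<omega>. SUP \<theta>\<in>phase_set. rate kUE (sinr_sum c (sigma2 / p) (H \<omega> \<theta>)))
      = C_down P h_d G hr d\<theta> kBS kUE sigma2 tau_d tau p"
    using eventually_gt_at_top[of 0]
    by eventually_elim (use assms in \<open>simp add: C_down_eq_rate_sinr_sum c_def H_def\<close>)
  with tendsto_mult_left[OF tendsto_expectation_SUP_rate_sinr_sum[OF c kUE sigma2 phases meas]]
  have "((\<lambda>p. C_down P h_d G hr d\<theta> kBS kUE sigma2 tau_d tau p) \<longlongrightarrow> tau_d / tau * expectation T) at_top"
    unfolding T_def by (rule tendsto_cong[THEN iffD1, rotated])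
  moreover have "AE \<omega> in P. rate kUE (1 / c) \<le> T \<omega>"
    using AE_one_le_max_support_card[OF assms(5,6,8), of d\<theta>]
    by eventually_elim (use c kUE in \<open>auto simp: T_def H_def intro!: rate_mono divide_right_mono\<close>)
  then have "rate kUE (1 / c) \<le> expectation T"
    by (rule integral_ge_const[OF integrable])
  then have "tau_d / tau * log 2 (1 + 1 / (kBS + kUE * (1 + kBS))) \<le> tau_d / tau * expectation T"
    using rate_div_eq[OF c kUE, of 1] ratio by (intro mult_left_mono) (simp_all add: c_def algebra_simps)
  moreover have "expectation T \<le> rate kUE (CARD('m) / c)"
    using max_support_card_le_CARD[OF phases] c kUE
    by (intro integral_le_const[OF integrable] AE_I2) (auto simp: T_def intro!: rate_mono divide_right_mono)
  then have "tau_d / tau * expectation T \<le> tau_d / tau * log 2 (1 + CARD('m) / (kBS + kUE * (CARD('m) + kBS)))"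
    using rate_div_eq[OF c kUE, of "CARD('m)"] ratio by (intro mult_left_mono) (simp_all add: c_def algebra_simps)
  ultimately show ?thesis
    by blast
qed

end
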